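(* Let $G$ be a topological group and $\pi\colon G\times X\to X$ a continuous action of $G$ on a non-archimedean uniform space $(X,\mathcal U)$ such that the action is $\pi$-uniform. Then the induced action by automorphisms $\overline\pi\colon G\times B_{NA}(X,\mathcal U)\to B_{NA}(X,\mathcal U)$, $(g,u)\mapsto gu$ (determined by $g\cdot i(x)=i(gx)$), is continuous, and the universal map $i\colon (X,\mathcal U)\to B_{NA}(X,\mathcal U)$ is a $G$-equivariant uniform embedding. In particular, $(X,\mathcal U)$ is uniformly $G$-automorphizable in $\mathbf{NA}$.
   Context: All spaces and groups are Hausdorff. A uniform space is non-archimedean if its uniformity has a base of equivalence relations; a topological group is non-archimedean ($\mathbf{NA}$) if it has a local base at the identity of open subgroups. $B_{NA}(X,\mathcal U)$ is the free Boolean non-archimedean group of $(X,\mathcal U)$: a Boolean (every non-identity element of order 2) $\mathbf{NA}$ group with a uniformly continuous map $i\colon X\to B_{NA}$ (two-sided uniformity) such that every uniformly continuous map from $X$ into a Boolean $\mathbf{NA}$ group factors uniquely as a continuous homomorphism composed with $i$; algebraically it is the free Boolean group on $X$. An action $\pi$ on $(X,\mathcal U)$ is $\pi$-uniform if for every $\varepsilon\in\mathcal U$ and $g_0\in G$ there exist $\delta\in\mathcal U$ and a neighborhood $O$ of $g_0$ with $(gx,gy)\in\varepsilon$ for all $(x,y)\in\delta$, $g\in O$. A uniform $G$-space is uniformly $G$-automorphizable in $\mathbf{NA}$ if it is a uniform $G$-subspace (with the two-sided uniformity) of some $\mathbf{NA}$ topological group on which $G$ acts continuously by automorphisms. *)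

theory Defs
  imports "HOL-Analysis.Analysis" "HOL-Algebra.Algebra"
begin

definition uniformity_on :: "'a set \<Rightarrow> ('a \<times> 'a) set set \<Rightarrow> bool" where
  "uniformity_on S U \<longleftrightarrow>
     U \<noteq> {} \<and>
     (\<forall>e\<in>U. Id_on S \<subseteq> e \<and> e \<subseteq> S \<times> S) \<and>
     (\<forall>e\<in>U. \<forall>d. e \<subseteq> d \<and> d \<subseteq> S \<times> S \<longrightarrow> d \<in> U) \<and>
     (\<forall>e\<in>U. \<forall>d\<in>U. e \<inter> d \<in> U) \<and>
     (\<forall>e\<in>U. converse e \<in> U) \<and>
     (\<forall>e\<in>U. \<exists>d\<in>U. relcomp d d \<subseteq> e) \<and>
     Inter U = Id_on S"

definition nonarch_uniformity :: "'a set \<Rightarrow> ('a \<times> 'a) set set \<Rightarrow> bool" where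
  "nonarch_uniformity S U \<longleftrightarrow> uniformity_on S U \<and>
     (\<forall>e\<in>U. \<exists>d\<in>U. equiv S d \<and> d \<subseteq> e)"

definition utop :: "'a set \<Rightarrow> ('a \<times> 'a) set set \<Rightarrow> 'a topology" where
  "utop S U = topology (\<lambda>S. S \<subseteq> S \<and> (\<forall>x\<in>S. \<exists>e\<in>U. e `` {x} \<subseteq> S))"

definition unif_continuous ::
  "'a set \<Rightarrow> ('a \<times> 'a) set set \<Rightarrow> 'b set \<Rightarrow> ('b \<times> 'b) set set \<Rightarrow> ('a \<Rightarrow> 'b) \<Rightarrow> bool" where
  "unif_continuous S U Y V f \<longleftrightarrow> f ` S \<subseteq> Y \<and>
     (\<forall>e\<in>V. \<exists>d\<in>U. \<forall>(x, y)\<in>d. (f x, f y) \<in> e)"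

definition unif_embedding ::
  "'a set \<Rightarrow> ('a \<times> 'a) set set \<Rightarrow> 'b set \<Rightarrow> ('b \<times> 'b) set set \<Rightarrow> ('a \<Rightarrow> 'b) \<Rightarrow> bool" where
  "unif_embedding S U Y V f \<longleftrightarrow> inj_on f S \<and> unif_continuous S U Y V f \<and>
     (\<forall>d\<in>U. \<exists>e\<in>V. \<forall>x\<in>S. \<forall>y\<in>S. (f x, f y) \<in> e \<longrightarrow> (x, y) \<in> d)"

definition topological_group :: "('g, 'm) monoid_scheme \<Rightarrow> 'g topology \<Rightarrow> bool" where
  "topological_group G T \<longleftrightarrow> group G \<and> topspace T = carrier G \<and> Hausdorff_space T \<and>
     continuous_map (prod_topology T T) T (\<lambda>(x, y). x \<otimes>\<^bsub>G\<^esub> y) \<and>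
     continuous_map T T (\<lambda>x. inv\<^bsub>G\<^esub> x)"

text \<open>Two-sided uniformity (supremum of the left and right uniformities).\<close>
definition two_sided_unif :: "('g, 'm) monoid_scheme \<Rightarrow> 'g topology \<Rightarrow> ('g \<times> 'g) set set" where
  "two_sided_unif G T = {e. e \<subseteq> carrier G \<times> carrier G \<and>
     (\<exists>V. openin T V \<and> \<one>\<^bsub>G\<^esub> \<in> V \<and>
        {(x, y). x \<in> carrier G \<and> y \<in> carrier G \<and>
                 inv\<^bsub>G\<^esub> x \<otimes>\<^bsub>G\<^esub> y \<in> V \<and> y \<otimes>\<^bsub>G\<^esub> inv\<^bsub>G\<^esub> x \<in> V} \<subseteq> e)}"

definition NA_group :: "('g, 'm) monoid_scheme \<Rightarrow> 'g topology \<Rightarrow> bool" where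
  "NA_group G T \<longleftrightarrow> topological_group G T \<and>
     (\<forall>W. openin T W \<and> \<one>\<^bsub>G\<^esub> \<in> W \<longrightarrow>
        (\<exists>H. subgroup H G \<and> openin T H \<and> H \<subseteq> W))"

definition boolean_group :: "('g, 'm) monoid_scheme \<Rightarrow> bool" where
  "boolean_group G \<longleftrightarrow> (\<forall>x\<in>carrier G. x \<otimes>\<^bsub>G\<^esub> x = \<one>\<^bsub>G\<^esub>)"

definition free_boolean_on :: "'b monoid \<Rightarrow> 'a set \<Rightarrow> ('a \<Rightarrow> 'b) \<Rightarrow> bool" where
  "free_boolean_on B S i \<longleftrightarrow> i ` S \<subseteq> carrier B \<and> inj_on i S \<and>
     carrier B = generate B (i ` S) \<and>
     (\<forall>F. finite F \<and> F \<subseteq> S \<and> F \<noteq> {} \<longrightarrow> finprod B i F \<noteq> \<one>\<^bsub>B\<^esub>)"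

text \<open>(B, TB, i) is the free Boolean NA group of (S, U).  The universal property is
  quantified over Boolean NA groups whose elements live in the same type as those of B
  (a HOL limitation).\<close>
definition free_boolean_NA ::
  "'a set \<Rightarrow> ('a \<times> 'a) set set \<Rightarrow> 'b monoid \<Rightarrow> 'b topology \<Rightarrow> ('a \<Rightarrow> 'b) \<Rightarrow> bool" where
  "free_boolean_NA S U B TB i \<longleftrightarrow>
     NA_group B TB \<and> boolean_group B \<and> free_boolean_on B S i \<and>
     unif_continuous S U (carrier B) (two_sided_unif B TB) i \<and>
     (\<forall>(K :: 'b monoid) TK f.
        NA_group K TK \<and> boolean_group K \<and>
        unif_continuous S U (carrier K) (two_sided_unif K TK) f \<longrightarrow>
        (\<exists>h. h \<in> hom B K \<and> continuous_map TB TK h \<and> (\<forall>x\<in>S. h (i x) = f x) \<and>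
           (\<forall>h'. h' \<in> hom B K \<and> continuous_map TB TK h' \<and> (\<forall>x\<in>S. h' (i x) = f x)
                 \<longrightarrow> (\<forall>u\<in>carrier B. h' u = h u))))"

definition group_action_on :: "'g monoid \<Rightarrow> 'a set \<Rightarrow> ('g \<Rightarrow> 'a \<Rightarrow> 'a) \<Rightarrow> bool" where
  "group_action_on G S \<pi> \<longleftrightarrow>
     (\<forall>g\<in>carrier G. \<forall>x\<in>S. \<pi> g x \<in> S) \<and>
     (\<forall>x\<in>S. \<pi> \<one>\<^bsub>G\<^esub> x = x) \<and>
     (\<forall>g\<in>carrier G. \<forall>h\<in>carrier G. \<forall>x\<in>S. \<pi> (g \<otimes>\<^bsub>G\<^esub> h) x = \<pi> g (\<pi> h x))"

definition pi_uniform ::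
  "'g topology \<Rightarrow> 'a set \<Rightarrow> ('a \<times> 'a) set set \<Rightarrow> ('g \<Rightarrow> 'a \<Rightarrow> 'a) \<Rightarrow> bool" where
  "pi_uniform T S U \<pi> \<longleftrightarrow>
     (\<forall>e\<in>U. \<forall>g0\<in>topspace T. \<exists>d\<in>U. \<exists>N. openin T N \<and> g0 \<in> N \<and>
        (\<forall>(x, y)\<in>d. \<forall>g\<in>N. (\<pi> g x, \<pi> g y) \<in> e))"

definition cont_action_by_automorphisms ::
  "'g monoid \<Rightarrow> 'g topology \<Rightarrow> 'b monoid \<Rightarrow> 'b topology \<Rightarrow> ('g \<Rightarrow> 'b \<Rightarrow> 'b) \<Rightarrow> bool" where
  "cont_action_by_automorphisms G T K TK act \<longleftrightarrow>
     group_action_on G (carrier K) act \<and>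
     (\<forall>g\<in>carrier G. act g \<in> iso K K) \<and>
     continuous_map (prod_topology T TK) TK (\<lambda>(g, u). act g u)"

text \<open>Uniform G-automorphizability in NA; the witness group lives in the type 'b.\<close>
definition unif_G_automorphizable_NA ::
  "'b itself \<Rightarrow> 'g monoid \<Rightarrow> 'g topology \<Rightarrow> 'a set \<Rightarrow> ('a \<times> 'a) set set \<Rightarrow> ('g \<Rightarrow> 'a \<Rightarrow> 'a) \<Rightarrow> bool" where
  "unif_G_automorphizable_NA _ G T S U \<pi> \<longleftrightarrow>
     (\<exists>(K :: 'b monoid) TK act j.
        NA_group K TK \<and> cont_action_by_automorphisms G T K TK act \<and>
        unif_embedding S U (carrier K) (two_sided_unif K TK) j \<and>
        (\<forall>g\<in>carrier G. \<forall>x\<in>S. j (\<pi> g x) = act g (j x)))"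

end

theory Submission
  imports Defs
begin

text \<open>For an equivalence entourage d let N_d be the subgroup of B_NA generated by the products
  i x \<cdot> i y with (x, y) \<in> d. It is open, being the kernel of the continuous lift of the
  d-invariant map x \<mapsto> i x N_d into the discrete Boolean group B_NA/N_d; and i x \<cdot> i y \<in> N_d
  forces (x, y) \<in> d, as one sees by lifting the indicator of a d-class into a two-element group.
  Hence i is a uniform embedding. For continuity of the action at (g0, u0), \<pi>-uniformity yields an
  N_d which every g near g0 maps into a prescribed open subgroup H, and the elements u whose orbit
  map g \<mapsto> g u is continuous at g0 modulo H form a subgroup containing i(X), hence everything.\<close>

lemma boolean_group_inv:
  assumes "group G" "boolean_group G" "x \<in> carrier G"
  shows "inv\<^bsub>G\<^esub> x = x"
  using assms by (metis boolean_group_def group.inv_equality)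

lemma boolean_group_comm_group:
  assumes "group G" "boolean_group G"
  shows "comm_group G"
proof (rule group.group_comm_groupI[OF assms(1)])
  fix x y assume xy: "x \<in> carrier G" "y \<in> carrier G"
  then have "x \<otimes>\<^bsub>G\<^esub> y = inv\<^bsub>G\<^esub> (x \<otimes>\<^bsub>G\<^esub> y)"
    using assms boolean_group_inv monoid.m_closed[OF group.is_monoid] by metis
  also have "\<dots> = y \<otimes>\<^bsub>G\<^esub> x"
    using assms xy boolean_group_inv group.inv_mult_group by metis
  finally show "x \<otimes>\<^bsub>G\<^esub> y = y \<otimes>\<^bsub>G\<^esub> x" .
qed

text \<open>Quotients are built inside the carrier type from chosen coset representatives, since the
  universal property in free_boolean_NA only ranges over groups on the element type of B_NA.\<close>

definition coset_rep :: "('a, 'm) monoid_scheme \<Rightarrow> 'a set \<Rightarrow> 'a \<Rightarrow> 'a" where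
  "coset_rep G N a = (SOME r. r \<in> N #>\<^bsub>G\<^esub> a)"

definition rep_quotient :: "('a, 'm) monoid_scheme \<Rightarrow> 'a set \<Rightarrow> 'a monoid" where
  "rep_quotient G N = \<lparr>carrier = coset_rep G N ` carrier G,
     mult = \<lambda>a b. coset_rep G N (a \<otimes>\<^bsub>G\<^esub> b), one = coset_rep G N \<one>\<^bsub>G\<^esub>\<rparr>"

context group
begin

lemma coset_rep_in_rcos:
  assumes "subgroup N G" "a \<in> carrier G"
  shows "coset_rep G N a \<in> N #> a"
  unfolding coset_rep_def using rcos_self[OF assms(2,1)] by (rule someI)

lemma coset_rep_closed:
  assumes "subgroup N G" "a \<in> carrier G"
  shows "coset_rep G N a \<in> carrier G"
  using coset_rep_in_rcos[OF assms] subgroup.elemrcos_carrier[OF assms(1) is_group assms(2)] by blast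

lemma rcos_coset_rep:
  assumes "subgroup N G" "a \<in> carrier G"
  shows "N #> coset_rep G N a = N #> a"
  using repr_independence[OF coset_rep_in_rcos[OF assms] assms(2,1)] by simp

lemma coset_rep_eq_iff_rcos:
  assumes "subgroup N G" "a \<in> carrier G" "b \<in> carrier G"
  shows "coset_rep G N a = coset_rep G N b \<longleftrightarrow> N #> a = N #> b"
  using rcos_coset_rep[OF assms(1)] assms(2,3) unfolding coset_rep_def by metis

lemma coset_rep_eq_iff:
  assumes "subgroup N G" "a \<in> carrier G" "b \<in> carrier G"
  shows "coset_rep G N a = coset_rep G N b \<longleftrightarrow> a \<otimes> inv b \<in> N"
proof -
  have "N #> a = N #> b \<longleftrightarrow> a \<in> N #> b"
    using repr_independence[OF _ assms(3,1)] repr_independenceD[OF assms(1,2)] by metis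
  then show ?thesis
    using coset_rep_eq_iff_rcos[OF assms] subgroup.rcos_module[OF assms(1) is_group assms(3,2)] by simp
qed

end

context normal
begin

lemma coset_rep_mult:
  assumes "a \<in> carrier G" "b \<in> carrier G"
  shows "coset_rep G H (coset_rep G H a \<otimes> coset_rep G H b) = coset_rep G H (a \<otimes> b)"
proof -
  have reps: "coset_rep G H a \<in> carrier G" "coset_rep G H b \<in> carrier G"
    using coset_rep_closed[OF subgroup_axioms] assms by auto
  have "H #> (coset_rep G H a \<otimes> coset_rep G H b) = (H #> a) <#> (H #> b)"
    using rcos_sum[OF reps] rcos_coset_rep[OF subgroup_axioms] assms by simp
  also have "\<dots> = H #> (a \<otimes> b)" using rcos_sum[OF assms] .
  finally show ?thesis using coset_rep_eq_iff_rcos[OF subgroup_axioms] reps assms by simp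
qed

lemma coset_rep_hom: "coset_rep G H \<in> hom G (rep_quotient G H)"
  unfolding hom_def rep_quotient_def by (auto simp: coset_rep_mult)

lemma rep_quotient_group: "group (rep_quotient G H)"
proof -
  have "rep_quotient G H \<lparr>carrier := coset_rep G H ` carrier G, one := coset_rep G H \<one>\<rparr>
        = rep_quotient G H"
    by (simp add: rep_quotient_def)
  then show ?thesis using hom_imp_img_group[OF coset_rep_hom] by simp
qed

lemma rep_quotient_boolean:
  assumes "boolean_group G"
  shows "boolean_group (rep_quotient G H)"
  using assms coset_rep_mult by (auto simp: boolean_group_def rep_quotient_def)

end

lemma uniformity_on_nonempty: "uniformity_on S U \<Longrightarrow> U \<noteq> {}"
  unfolding uniformity_on_def by (elim conjE) assumption

lemma uniformity_on_subset:
  assumes "uniformity_on S U" "e \<in> U"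
  shows "e \<subseteq> S \<times> S"
proof -
  have "\<forall>e\<in>U. Id_on S \<subseteq> e \<and> e \<subseteq> S \<times> S"
    using assms(1) unfolding uniformity_on_def by (elim conjE) assumption
  with assms(2) show ?thesis by blast
qed

lemma uniformity_on_Int:
  assumes "uniformity_on S U" "e \<in> U" "d \<in> U"
  shows "e \<inter> d \<in> U"
proof -
  have "\<forall>e\<in>U. \<forall>d\<in>U. e \<inter> d \<in> U"
    using assms(1) unfolding uniformity_on_def by (elim conjE) assumption
  with assms(2,3) show ?thesis by blast
qed

lemma openin_utop:
  assumes "uniformity_on S U"
  shows "openin (utop S U) A \<longleftrightarrow> (\<forall>x\<in>A. \<exists>e\<in>U. e``{x} \<subseteq> A)"
proof -
  define P where "P A \<longleftrightarrow> (\<forall>x\<in>A. \<exists>e\<in>U. e``{x} \<subseteq> A)" for A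
  have "P (A1 \<inter> A2)" if "P A1" "P A2" for A1 A2
  proof -
    have "\<exists>e\<in>U. e``{x} \<subseteq> A1 \<inter> A2" if "x \<in> A1 \<inter> A2" for x
    proof -
      obtain e1 e2 where "e1 \<in> U" "e2 \<in> U" "e1``{x} \<subseteq> A1" "e2``{x} \<subseteq> A2"
        using \<open>P A1\<close> \<open>P A2\<close> \<open>x \<in> A1 \<inter> A2\<close> unfolding P_def by blast
      then show ?thesis using uniformity_on_Int[OF assms, of e1 e2] by blast
    qed
    then show ?thesis unfolding P_def by blast
  qed
  moreover have "P (\<Union>K)" if "\<forall>A\<in>K. P A" for K
    using that unfolding P_def by (meson UnionE Union_upper order_trans)
  ultimately have "istopology P" unfolding istopology_def by blast
  moreover have "utop S U = topology P" unfolding utop_def P_def by simp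
  ultimately show ?thesis by (simp add: topology_inverse' P_def)
qed

text \<open>The bound variable of the predicate in utop_def shadows S, so the points of this topology
  range over the whole type.\<close>

lemma topspace_utop:
  assumes "uniformity_on S U"
  shows "topspace (utop S U) = UNIV"
proof -
  have "U \<noteq> {}" using uniformity_on_nonempty[OF assms] .
  then have "openin (utop S U) UNIV" using openin_utop[OF assms] by blast
  then show ?thesis using openin_subset by blast
qed

lemma openin_utop_equiv_class:
  assumes "uniformity_on S U" "d \<in> U" "equiv S d"
  shows "openin (utop S U) (d``{z})"
  unfolding openin_utop[OF assms(1)]
  using assms(2,3) unfolding equiv_def trans_def by blast

lemma unif_continuous_if_constant_on_entourage:
  assumes "group K" "uniformity_on S U" "f ` S \<subseteq> carrier K" "d \<in> U"
    and "\<And>x y. (x, y) \<in> d \<Longrightarrow> f x = f y"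
  shows "unif_continuous S U (carrier K) (two_sided_unif K TK) f"
  unfolding unif_continuous_def
proof (intro conjI ballI)
  fix e assume "e \<in> two_sided_unif K TK"
  then obtain V where "\<one>\<^bsub>K\<^esub> \<in> V"
    "{(x, y). x \<in> carrier K \<and> y \<in> carrier K \<and>
        inv\<^bsub>K\<^esub> x \<otimes>\<^bsub>K\<^esub> y \<in> V \<and> y \<otimes>\<^bsub>K\<^esub> inv\<^bsub>K\<^esub> x \<in> V} \<subseteq> e"
    unfolding two_sided_unif_def by blast
  then have diag: "(a, a) \<in> e" if "a \<in> carrier K" for a
    using that group.l_inv[OF assms(1)] group.r_inv[OF assms(1)] by auto
  have "\<forall>(x, y)\<in>d. (f x, f y) \<in> e"
  proof clarify
    fix x y assume xy: "(x, y) \<in> d"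
    then have "f x \<in> carrier K" using uniformity_on_subset[OF assms(2,4)] assms(3) by blast
    then show "(f x, f y) \<in> e" using diag assms(5)[OF xy] by simp
  qed
  then show "\<exists>d\<in>U. \<forall>(x, y)\<in>d. (f x, f y) \<in> e" using assms(4) by blast
qed fact

lemma NA_group_discrete:
  assumes "group K"
  shows "NA_group K (discrete_topology (carrier K))"
proof -
  interpret group K by fact
  have "topological_group K (discrete_topology (carrier K))"
    unfolding topological_group_def prod_topology_discrete_topology[symmetric]
    using assms by auto
  with triv_subgroup show ?thesis unfolding NA_group_def by auto
qed

lemma openin_left_translate_preimage:
  assumes "topological_group G T" "openin T W" "w \<in> carrier G"
  shows "openin T {v \<in> carrier G. w \<otimes>\<^bsub>G\<^esub> v \<in> W}"
proof -
  have mult: "continuous_map (prod_topology T T) T (\<lambda>(x, y). x \<otimes>\<^bsub>G\<^esub> y)"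
    and top: "topspace T = carrier G"
    using assms(1) unfolding topological_group_def by auto
  have "continuous_map T (prod_topology T T) (\<lambda>v. (w, v))"
    by (rule continuous_map_pairedI) (simp_all add: top assms(3))
  from continuous_map_compose[OF this mult]
  have "continuous_map T T (\<lambda>v. w \<otimes>\<^bsub>G\<^esub> v)" by (simp add: o_def)
  from openin_continuous_map_preimage[OF this assms(2)] show ?thesis by (simp add: top)
qed

lemma NA_group_open_subgroup_translate:
  assumes "NA_group G T" "openin T W" "w \<in> W"
  obtains H where "subgroup H G" "openin T H" "\<And>v. v \<in> H \<Longrightarrow> w \<otimes>\<^bsub>G\<^esub> v \<in> W"
proof -
  have tg: "topological_group G T"
    and small: "\<forall>W. openin T W \<and> \<one>\<^bsub>G\<^esub> \<in> W \<longrightarrow> (\<exists>H. subgroup H G \<and> openin T H \<and> H \<subseteq> W)"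
    using assms(1) unfolding NA_group_def by blast+
  have grp: "group G" and top: "topspace T = carrier G"
    using tg unfolding topological_group_def by blast+
  have w: "w \<in> carrier G" using openin_subset[OF assms(2)] assms(3) top by blast
  then have "\<one>\<^bsub>G\<^esub> \<in> {v \<in> carrier G. w \<otimes>\<^bsub>G\<^esub> v \<in> W}"
    using assms(3) by (simp add: group.is_monoid[OF grp])
  with small openin_left_translate_preimage[OF tg assms(2) w]
  obtain H where "subgroup H G" "openin T H" "H \<subseteq> {v \<in> carrier G. w \<otimes>\<^bsub>G\<^esub> v \<in> W}"
    by blast
  with that show thesis by blast
qed

lemma boolean_open_subgroup_entourage:
  assumes "group K" "boolean_group K" "openin TK H" "\<one>\<^bsub>K\<^esub> \<in> H"
  shows "{(a, b). a \<in> carrier K \<and> b \<in> carrier K \<and> a \<otimes>\<^bsub>K\<^esub> b \<in> H} \<in> two_sided_unif K TK"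
proof -
  interpret comm_group K using boolean_group_comm_group[OF assms(1,2)] .
  have "inv\<^bsub>K\<^esub> a \<otimes>\<^bsub>K\<^esub> b = a \<otimes>\<^bsub>K\<^esub> b" "b \<otimes>\<^bsub>K\<^esub> inv\<^bsub>K\<^esub> a = a \<otimes>\<^bsub>K\<^esub> b"
    if "a \<in> carrier K" "b \<in> carrier K" for a b
    using that boolean_group_inv[OF assms(1,2)] m_comm by simp_all
  then show ?thesis
    unfolding two_sided_unif_def using assms(3,4) by (intro CollectI conjI exI[of _ H]) auto
qed

lemma hom_eq_on_generate:
  assumes "group G" "group K" "h1 \<in> hom G K" "h2 \<in> hom G K" "A \<subseteq> carrier G"
    and "\<And>a. a \<in> A \<Longrightarrow> h1 a = h2 a" "u \<in> generate G A"
  shows "h1 u = h2 u"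
proof -
  interpret h1: group_hom G K h1
    using assms(1-3) by (simp add: group_hom_def group_hom_axioms_def)
  interpret h2: group_hom G K h2
    using assms(1,2,4) by (simp add: group_hom_def group_hom_axioms_def)
  from assms(7) show ?thesis
  proof (induction u rule: generate.induct)
    case (inv a)
    then show ?case using assms(5,6) by auto
  next
    case (eng a b)
    then show ?case using h1.G.generate_in_carrier[OF assms(5)] by auto
  qed (use assms(6) in auto)
qed

lemma hom_image_generate_subset:
  assumes "group G" "group K" "h \<in> hom G K" "A \<subseteq> carrier G" "subgroup H K" "h ` A \<subseteq> H"
  shows "h ` generate G A \<subseteq> H"
proof -
  interpret group_hom G K h
    using assms(1-3) by (simp add: group_hom_def group_hom_axioms_def)
  have "h ` generate G A = generate K (h ` A)" by (rule generate_img[OF assms(4), symmetric])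
  also have "\<dots> \<subseteq> H" by (rule H.generate_subgroup_incl[OF assms(6,5)])
  finally show ?thesis .
qed

locale free_boolean_NA_group =
  fixes S :: "'a set" and U :: "('a \<times> 'a) set set"
    and B :: "'b monoid" and TB :: "'b topology" and i :: "'a \<Rightarrow> 'b"
  assumes nonarch: "nonarch_uniformity S U"
    and free: "free_boolean_NA S U B TB i"
begin

lemma NA_group_B: "NA_group B TB"
  using free unfolding free_boolean_NA_def by (elim conjE) assumption

lemma boolean_B: "boolean_group B"
  using free unfolding free_boolean_NA_def by (elim conjE) assumption

lemma free_boolean_on_B: "free_boolean_on B S i"
  using free unfolding free_boolean_NA_def by (elim conjE) assumption

lemma i_unif_continuous: "unif_continuous S U (carrier B) (two_sided_unif B TB) i"
  using free unfolding free_boolean_NA_def by (elim conjE) assumption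

lemma topological_group_B: "topological_group B TB"
  using NA_group_B unfolding NA_group_def by blast

lemma group_B: "group B"
  and topspace_B: "topspace TB = carrier B"
  using topological_group_B unfolding topological_group_def by blast+

sublocale B: comm_group B
  by (rule boolean_group_comm_group[OF group_B boolean_B])

lemma inv_B: "x \<in> carrier B \<Longrightarrow> inv\<^bsub>B\<^esub> x = x"
  by (rule boolean_group_inv[OF group_B boolean_B])

lemma sq_B: "x \<in> carrier B \<Longrightarrow> x \<otimes>\<^bsub>B\<^esub> x = \<one>\<^bsub>B\<^esub>"
  using boolean_B unfolding boolean_group_def by blast

lemma uniformity_on_U: "uniformity_on S U"
  using nonarch unfolding nonarch_uniformity_def by blast

lemma entourage_subset: "e \<in> U \<Longrightarrow> e \<subseteq> S \<times> S"
  by (rule uniformity_on_subset[OF uniformity_on_U])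

lemma equiv_entourage_below:
  assumes "e \<in> U"
  obtains d where "d \<in> U" "equiv S d" "d \<subseteq> e"
  using nonarch assms unfolding nonarch_uniformity_def by blast

lemma i_closed: "x \<in> S \<Longrightarrow> i x \<in> carrier B"
  and inj_i: "inj_on i S"
  and carrier_B_generate: "carrier B = generate B (i ` S)"
  using free_boolean_on_B unfolding free_boolean_on_def by blast+

lemma i_ne_one:
  assumes "x \<in> S"
  shows "i x \<noteq> \<one>\<^bsub>B\<^esub>"
proof -
  have "finprod B i {x} \<noteq> \<one>\<^bsub>B\<^esub>" using free_boolean_on_B assms unfolding free_boolean_on_def by blast
  then show ?thesis using i_closed[OF assms] by simp
qed

lemma universal_lift:
  fixes K :: "'b monoid"
  assumes "NA_group K TK" "boolean_group K" "unif_continuous S U (carrier K) (two_sided_unif K TK) f"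
  obtains h where "h \<in> hom B K" "continuous_map TB TK h" "\<And>x. x \<in> S \<Longrightarrow> h (i x) = f x"
proof -
  have "\<forall>(K :: 'b monoid) TK f. NA_group K TK \<and> boolean_group K \<and>
          unif_continuous S U (carrier K) (two_sided_unif K TK) f \<longrightarrow>
        (\<exists>h. h \<in> hom B K \<and> continuous_map TB TK h \<and> (\<forall>x\<in>S. h (i x) = f x) \<and>
           (\<forall>h'. h' \<in> hom B K \<and> continuous_map TB TK h' \<and> (\<forall>x\<in>S. h' (i x) = f x)
                 \<longrightarrow> (\<forall>u\<in>carrier B. h' u = h u)))"
    using free unfolding free_boolean_NA_def by (elim conjE) assumption
  from this[rule_format, OF conjI[OF assms(1) conjI[OF assms(2,3)]]] that show thesis by blast
qed

lemma hom_eq_if_eq_on_i: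
  assumes "group K" "h1 \<in> hom B K" "h2 \<in> hom B K" "\<And>x. x \<in> S \<Longrightarrow> h1 (i x) = h2 (i x)"
    and "u \<in> carrier B"
  shows "h1 u = h2 u"
  using hom_eq_on_generate[OF group_B assms(1-3) _ _, of "i ` S"] assms(4,5) i_closed
    carrier_B_generate by blast

definition entourage_subgroup :: "('a \<times> 'a) set \<Rightarrow> 'b set" where
  "entourage_subgroup d = generate B {i x \<otimes>\<^bsub>B\<^esub> i y | x y. (x, y) \<in> d}"

lemma entourage_generators_closed:
  "d \<in> U \<Longrightarrow> {i x \<otimes>\<^bsub>B\<^esub> i y | x y. (x, y) \<in> d} \<subseteq> carrier B"
  using entourage_subset i_closed by blast

lemma subgroup_entourage_subgroup: "d \<in> U \<Longrightarrow> subgroup (entourage_subgroup d) B"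
  unfolding entourage_subgroup_def
  by (rule B.generate_is_subgroup[OF entourage_generators_closed])

lemma entourage_subgroupI: "(x, y) \<in> d \<Longrightarrow> i x \<otimes>\<^bsub>B\<^esub> i y \<in> entourage_subgroup d"
  unfolding entourage_subgroup_def by (blast intro: generate.incl)

lemma lift_entourage_invariant_map:
  fixes K :: "'b monoid"
  assumes "group K" "boolean_group K" "d \<in> U" "f ` S \<subseteq> carrier K"
    and "\<And>x y. (x, y) \<in> d \<Longrightarrow> f x = f y"
  obtains h where "h \<in> hom B K" "continuous_map TB (discrete_topology (carrier K)) h"
    "\<And>x. x \<in> S \<Longrightarrow> h (i x) = f x" "\<And>u. u \<in> entourage_subgroup d \<Longrightarrow> h u = \<one>\<^bsub>K\<^esub>"
proof -
  obtain h where h: "h \<in> hom B K" "continuous_map TB (discrete_topology (carrier K)) h"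
    "\<And>x. x \<in> S \<Longrightarrow> h (i x) = f x"
    using universal_lift[OF NA_group_discrete[OF assms(1)] assms(2)
        unif_continuous_if_constant_on_entourage[OF assms(1) uniformity_on_U assms(4,3,5)]] by blast
  have "h (i x \<otimes>\<^bsub>B\<^esub> i y) = \<one>\<^bsub>K\<^esub>" if "(x, y) \<in> d" for x y
  proof -
    have xy: "x \<in> S" "y \<in> S" using entourage_subset[OF assms(3)] that by auto
    then have "h (i x \<otimes>\<^bsub>B\<^esub> i y) = f x \<otimes>\<^bsub>K\<^esub> f x"
      using hom_mult[OF h(1) i_closed i_closed] h(3) assms(5)[OF that] by simp
    moreover have "f x \<in> carrier K" using assms(4) xy(1) by blast
    ultimately show ?thesis using assms(2) unfolding boolean_group_def by simp
  qed
  then have "h ` entourage_subgroup d \<subseteq> {\<one>\<^bsub>K\<^esub>}"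
    unfolding entourage_subgroup_def
    by (intro hom_image_generate_subset[OF group_B assms(1) h(1) entourage_generators_closed[OF assms(3)]
          group.triv_subgroup[OF assms(1)]]) blast
  with h that show thesis by blast
qed

lemma entourage_subgroup_open:
  assumes "d \<in> U"
  shows "openin TB (entourage_subgroup d)"
proof -
  define N where "N = entourage_subgroup d"
  have "subgroup N B" unfolding N_def by (rule subgroup_entourage_subgroup[OF assms])
  then interpret N: normal N B by (rule B.subgroup_imp_normal)
  define K where "K = rep_quotient B N"
  have K: "group K" "boolean_group K"
    unfolding K_def by (rule N.rep_quotient_group, rule N.rep_quotient_boolean[OF boolean_B])
  have rep_i: "(\<lambda>x. coset_rep B N (i x)) ` S \<subseteq> carrier K"
    unfolding K_def rep_quotient_def using i_closed by auto
  have invariant: "coset_rep B N (i x) = coset_rep B N (i y)" if "(x, y) \<in> d" for x y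
  proof -
    have "x \<in> S" "y \<in> S" using entourage_subset[OF assms] that by auto
    then show ?thesis
      using B.coset_rep_eq_iff[OF N.subgroup_axioms] i_closed inv_B entourage_subgroupI[OF that]
      unfolding N_def by simp
  qed
  obtain h where h: "h \<in> hom B K" "continuous_map TB (discrete_topology (carrier K)) h"
    "\<And>x. x \<in> S \<Longrightarrow> h (i x) = coset_rep B N (i x)"
    using lift_entourage_invariant_map[OF K assms rep_i invariant] by metis
  have "h u = coset_rep B N u" if "u \<in> carrier B" for u
    using hom_eq_if_eq_on_i[OF K(1) h(1) _ h(3) that] N.coset_rep_hom unfolding K_def by blast
  then have "N = {u \<in> topspace TB. h u \<in> {coset_rep B N \<one>\<^bsub>B\<^esub>}}"
    using B.coset_rep_eq_iff[OF N.subgroup_axioms _ B.one_closed] N.subset topspace_B by auto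
  moreover have "openin (discrete_topology (carrier K)) {coset_rep B N \<one>\<^bsub>B\<^esub>}"
    unfolding K_def rep_quotient_def by simp
  ultimately show ?thesis
    using openin_continuous_map_preimage[OF h(2)] unfolding N_def by metis
qed

lemma entourage_subgroup_iff:
  assumes "d \<in> U" "equiv S d" "x \<in> S" "y \<in> S"
  shows "i x \<otimes>\<^bsub>B\<^esub> i y \<in> entourage_subgroup d \<longleftrightarrow> (x, y) \<in> d"
proof
  assume mem: "i x \<otimes>\<^bsub>B\<^esub> i y \<in> entourage_subgroup d"
  show "(x, y) \<in> d"
  proof (rule ccontr)
    assume not_related: "(x, y) \<notin> d"
    define a where "a = i x"
    have a: "a \<in> carrier B" "a \<noteq> \<one>\<^bsub>B\<^esub>" unfolding a_def using i_closed i_ne_one assms(3) by auto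
    have "subgroup {\<one>\<^bsub>B\<^esub>, a} B"
      unfolding subgroup_def using a(1) sq_B inv_B by auto
    define K where "K = B\<lparr>carrier := {\<one>\<^bsub>B\<^esub>, a}\<rparr>"
    have K: "group K" unfolding K_def by (rule B.subgroup_imp_group) fact
    have "boolean_group K"
      unfolding boolean_group_def K_def using sq_B[OF a(1)] by auto
    moreover define f where "f z = (if z \<in> d``{x} then a else \<one>\<^bsub>B\<^esub>)" for z
    moreover have "f ` S \<subseteq> carrier K" unfolding f_def K_def by (simp add: image_subset_iff)
    moreover have "f z = f w" if "(z, w) \<in> d" for z w
    proof -
      have "z \<in> d``{x} \<longleftrightarrow> w \<in> d``{x}"
        using assms(2) that unfolding equiv_def sym_def trans_def by blast
      then show ?thesis unfolding f_def by simp
    qed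
    ultimately obtain h where h: "h \<in> hom B K" "\<And>z. z \<in> S \<Longrightarrow> h (i z) = f z"
      "\<And>u. u \<in> entourage_subgroup d \<Longrightarrow> h u = \<one>\<^bsub>K\<^esub>"
      using lift_entourage_invariant_map[OF K _ assms(1)] by metis
    have "x \<in> d``{x}" "y \<notin> d``{x}"
      using assms(2,3) not_related unfolding equiv_def refl_on_def by auto
    then have "h (i x \<otimes>\<^bsub>B\<^esub> i y) = a"
      using hom_mult[OF h(1) i_closed i_closed] h(2) assms(3,4) a(1) unfolding f_def K_def by simp
    then have "a = \<one>\<^bsub>B\<^esub>" using h(3)[OF mem] unfolding K_def by simp
    with a(2) show False ..
  qed
qed (rule entourage_subgroupI)

lemma equiv_entourage_into_open_subgroup:
  assumes "openin TB H" "\<one>\<^bsub>B\<^esub> \<in> H"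
  obtains d where "d \<in> U" "equiv S d" "\<And>x y. (x, y) \<in> d \<Longrightarrow> i x \<otimes>\<^bsub>B\<^esub> i y \<in> H"
proof -
  obtain e where "e \<in> U"
    "\<forall>(x, y)\<in>e. (i x, i y) \<in> {(a, b). a \<in> carrier B \<and> b \<in> carrier B \<and> a \<otimes>\<^bsub>B\<^esub> b \<in> H}"
    using i_unif_continuous boolean_open_subgroup_entourage[OF group_B boolean_B assms]
    unfolding unif_continuous_def by blast
  moreover obtain d where "d \<in> U" "equiv S d" "d \<subseteq> e"
    using equiv_entourage_below[OF \<open>e \<in> U\<close>] .
  ultimately show thesis using that by blast
qed

lemma unif_embedding_i: "unif_embedding S U (carrier B) (two_sided_unif B TB) i"
  unfolding unif_embedding_def
proof (intro conjI ballI inj_i i_unif_continuous)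
  fix e assume "e \<in> U"
  then obtain d where d: "d \<in> U" "equiv S d" "d \<subseteq> e" by (rule equiv_entourage_below)
  define E where "E = {(a, b). a \<in> carrier B \<and> b \<in> carrier B \<and> a \<otimes>\<^bsub>B\<^esub> b \<in> entourage_subgroup d}"
  have "E \<in> two_sided_unif B TB"
    using boolean_open_subgroup_entourage[OF group_B boolean_B entourage_subgroup_open[OF d(1)]]
      subgroup.one_closed[OF subgroup_entourage_subgroup[OF d(1)]] unfolding E_def by blast
  moreover have "\<forall>x\<in>S. \<forall>y\<in>S. (i x, i y) \<in> E \<longrightarrow> (x, y) \<in> e"
    using entourage_subgroup_iff[OF d(1,2)] d(3) unfolding E_def by auto
  ultimately show "\<exists>E\<in>two_sided_unif B TB. \<forall>x\<in>S. \<forall>y\<in>S. (i x, i y) \<in> E \<longrightarrow> (x, y) \<in> e" ..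
qed

end

locale free_boolean_NA_action = free_boolean_NA_group S U B TB i for S U B TB i +
  fixes G :: "'g monoid" and T :: "'g topology" and \<pi> :: "'g \<Rightarrow> 'a \<Rightarrow> 'a"
  assumes topological_group_G: "topological_group G T"
    and action: "group_action_on G S \<pi>"
    and continuous_action: "continuous_map (prod_topology T (utop S U)) (utop S U) (\<lambda>(g, x). \<pi> g x)"
    and pi_uniform: "pi_uniform T S U \<pi>"
begin

lemma group_G: "group G"
  and topspace_T: "topspace T = carrier G"
  using topological_group_G unfolding topological_group_def by blast+

sublocale G: group G by (rule group_G)

lemma action_closed: "g \<in> carrier G \<Longrightarrow> x \<in> S \<Longrightarrow> \<pi> g x \<in> S"
  and action_one: "x \<in> S \<Longrightarrow> \<pi> \<one>\<^bsub>G\<^esub> x = x"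
  and action_mult:
    "g \<in> carrier G \<Longrightarrow> h \<in> carrier G \<Longrightarrow> x \<in> S \<Longrightarrow> \<pi> (g \<otimes>\<^bsub>G\<^esub> h) x = \<pi> g (\<pi> h x)"
  using action unfolding group_action_on_def by blast+

lemma pi_uniform_at:
  assumes "e \<in> U" "g0 \<in> carrier G"
  obtains d N where "d \<in> U" "openin T N" "g0 \<in> N"
    "\<And>x y g. (x, y) \<in> d \<Longrightarrow> g \<in> N \<Longrightarrow> (\<pi> g x, \<pi> g y) \<in> e"
proof -
  have "\<forall>e\<in>U. \<forall>g0\<in>topspace T. \<exists>d\<in>U. \<exists>N. openin T N \<and> g0 \<in> N \<and>
          (\<forall>(x, y)\<in>d. \<forall>g\<in>N. (\<pi> g x, \<pi> g y) \<in> e)"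
    using pi_uniform unfolding pi_uniform_def .
  with assms topspace_T that show thesis by fastforce
qed

lemma unif_continuous_translate:
  assumes "g \<in> carrier G"
  shows "unif_continuous S U (carrier B) (two_sided_unif B TB) (\<lambda>x. i (\<pi> g x))"
  unfolding unif_continuous_def
proof (intro conjI ballI)
  show "(\<lambda>x. i (\<pi> g x)) ` S \<subseteq> carrier B" using i_closed action_closed[OF assms] by blast
  fix E assume "E \<in> two_sided_unif B TB"
  then obtain e where e: "e \<in> U" "\<forall>(x, y)\<in>e. (i x, i y) \<in> E"
    using i_unif_continuous unfolding unif_continuous_def by blast
  obtain d N where "d \<in> U" "g \<in> N" "\<And>x y g. (x, y) \<in> d \<Longrightarrow> g \<in> N \<Longrightarrow> (\<pi> g x, \<pi> g y) \<in> e"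
    using pi_uniform_at[OF e(1) assms] by metis
  with e(2) show "\<exists>d\<in>U. \<forall>(x, y)\<in>d. (i (\<pi> g x), i (\<pi> g y)) \<in> E" by blast
qed

definition induced_action :: "'g \<Rightarrow> 'b \<Rightarrow> 'b" where
  "induced_action g =
     (SOME h. h \<in> hom B B \<and> continuous_map TB TB h \<and> (\<forall>x\<in>S. h (i x) = i (\<pi> g x)))"

lemma induced_action:
  assumes "g \<in> carrier G"
  shows "induced_action g \<in> hom B B" "\<And>x. x \<in> S \<Longrightarrow> induced_action g (i x) = i (\<pi> g x)"
proof -
  obtain h where "h \<in> hom B B" "continuous_map TB TB h" "\<And>x. x \<in> S \<Longrightarrow> h (i x) = i (\<pi> g x)"
    using universal_lift[OF NA_group_B boolean_B unif_continuous_translate[OF assms]] by metis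
  then have "\<exists>h. h \<in> hom B B \<and> continuous_map TB TB h \<and> (\<forall>x\<in>S. h (i x) = i (\<pi> g x))"
    by blast
  from someI_ex[OF this]
  show "induced_action g \<in> hom B B" "\<And>x. x \<in> S \<Longrightarrow> induced_action g (i x) = i (\<pi> g x)"
    unfolding induced_action_def by blast+
qed

lemma induced_action_one:
  assumes "u \<in> carrier B"
  shows "induced_action \<one>\<^bsub>G\<^esub> u = u"
proof -
  have one: "\<one>\<^bsub>G\<^esub> \<in> carrier G" by (rule G.one_closed)
  have "id \<in> hom B B" unfolding hom_def by simp
  from hom_eq_if_eq_on_i[OF group_B induced_action(1)[OF one] this _ assms]
  show ?thesis using induced_action(2)[OF one] action_one by simp
qed

lemma induced_action_mult:
  assumes g: "g \<in> carrier G" and h: "h \<in> carrier G" and u: "u \<in> carrier B"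
  shows "induced_action (g \<otimes>\<^bsub>G\<^esub> h) u = induced_action g (induced_action h u)"
proof -
  have gh: "g \<otimes>\<^bsub>G\<^esub> h \<in> carrier G" using g h by (rule G.m_closed)
  have "induced_action g \<circ> induced_action h \<in> hom B B"
    using induced_action(1)[OF h] induced_action(1)[OF g] by (rule hom_compose)
  from hom_eq_if_eq_on_i[OF group_B induced_action(1)[OF gh] this _ u]
  show ?thesis
    using induced_action(2)[OF gh] induced_action(2)[OF g] induced_action(2)[OF h]
      action_mult[OF g h] action_closed[OF h] by simp
qed

lemma group_action_induced_action: "group_action_on G (carrier B) induced_action"
  unfolding group_action_on_def
  using hom_in_carrier[OF induced_action(1)] induced_action_one induced_action_mult by blast

lemma induced_action_iso:
  assumes g: "g \<in> carrier G"
  shows "induced_action g \<in> iso B B"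
proof -
  have g': "inv\<^bsub>G\<^esub> g \<in> carrier G" using g by (rule G.inv_closed)
  have "induced_action (inv\<^bsub>G\<^esub> g) (induced_action g u) = u"
    "induced_action g (induced_action (inv\<^bsub>G\<^esub> g) u) = u" if "u \<in> carrier B" for u
    using induced_action_mult[OF g' g that] induced_action_mult[OF g g' that]
      induced_action_one[OF that] G.l_inv[OF g] G.r_inv[OF g] by simp_all
  then have "bij_betw (induced_action g) (carrier B) (carrier B)"
    using hom_in_carrier[OF induced_action(1)[OF g]] hom_in_carrier[OF induced_action(1)[OF g']]
    by (intro bij_betw_byWitness[where f' = "induced_action (inv\<^bsub>G\<^esub> g)"]) auto
  then show ?thesis unfolding iso_def using induced_action(1)[OF g] by blast
qed

lemma orbit_of_generator_near:
  assumes "openin TB H" "\<one>\<^bsub>B\<^esub> \<in> H" "x \<in> S" "g0 \<in> carrier G"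
  obtains N where "openin T N" "g0 \<in> N" "\<And>g. g \<in> N \<Longrightarrow> i (\<pi> g x) \<otimes>\<^bsub>B\<^esub> i (\<pi> g0 x) \<in> H"
proof -
  obtain d where d: "d \<in> U" "equiv S d" "\<And>x y. (x, y) \<in> d \<Longrightarrow> i x \<otimes>\<^bsub>B\<^esub> i y \<in> H"
    using equiv_entourage_into_open_subgroup[OF assms(1,2)] by metis
  have "continuous_map T (prod_topology T (utop S U)) (\<lambda>g. (g, x))"
    by (intro continuous_map_pairedI continuous_map_id[unfolded id_def] continuous_map_const[THEN iffD2])
      (simp add: topspace_utop[OF uniformity_on_U])
  from continuous_map_compose[OF this continuous_action]
  have orbit: "continuous_map T (utop S U) (\<lambda>g. \<pi> g x)" by (simp add: o_def)
  define N where "N = {g \<in> topspace T. \<pi> g x \<in> d``{\<pi> g0 x}}"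
  have "openin T N"
    unfolding N_def
    by (rule openin_continuous_map_preimage[OF orbit openin_utop_equiv_class[OF uniformity_on_U d(1,2)]])
  moreover have "g0 \<in> N"
    using action_closed[OF assms(4,3)] d(2) assms(4) topspace_T unfolding N_def equiv_def refl_on_def by auto
  moreover have "i (\<pi> g x) \<otimes>\<^bsub>B\<^esub> i (\<pi> g0 x) \<in> H" if "g \<in> N" for g
  proof -
    have "g \<in> carrier G" "(\<pi> g0 x, \<pi> g x) \<in> d" using that topspace_T unfolding N_def by auto
    then show ?thesis
      using d(3) B.m_comm i_closed action_closed assms(3,4) by metis
  qed
  ultimately show thesis using that by blast
qed

context
  fixes pb :: "'g \<Rightarrow> 'b \<Rightarrow> 'b"
  assumes pb_hom: "\<And>g. g \<in> carrier G \<Longrightarrow> pb g \<in> hom B B"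
    and pb_i: "\<And>g x. g \<in> carrier G \<Longrightarrow> x \<in> S \<Longrightarrow> pb g (i x) = i (\<pi> g x)"
begin

lemma pb_closed: "g \<in> carrier G \<Longrightarrow> u \<in> carrier B \<Longrightarrow> pb g u \<in> carrier B"
  using hom_in_carrier[OF pb_hom] by blast

lemma equicontinuous_at_one:
  assumes "subgroup H B" "openin TB H" "g0 \<in> carrier G"
  obtains N M where "openin T N" "g0 \<in> N" "subgroup M B" "openin TB M"
    "\<And>g v. g \<in> N \<Longrightarrow> v \<in> M \<Longrightarrow> pb g v \<in> H"
proof -
  obtain e where e: "e \<in> U" "\<And>x y. (x, y) \<in> e \<Longrightarrow> i x \<otimes>\<^bsub>B\<^esub> i y \<in> H"
    using equiv_entourage_into_open_subgroup[OF assms(2) subgroup.one_closed[OF assms(1)]] by metis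
  obtain d' N where d': "d' \<in> U" "openin T N" "g0 \<in> N"
    "\<And>x y g. (x, y) \<in> d' \<Longrightarrow> g \<in> N \<Longrightarrow> (\<pi> g x, \<pi> g y) \<in> e"
    using pi_uniform_at[OF e(1) assms(3)] by metis
  obtain d where d: "d \<in> U" "equiv S d" "d \<subseteq> d'" using equiv_entourage_below[OF d'(1)] by metis
  have "pb g v \<in> H" if g: "g \<in> N" and v: "v \<in> entourage_subgroup d" for g v
  proof -
    have g: "g \<in> carrier G" using openin_subset[OF d'(2)] g topspace_T by blast
    have "pb g (i x \<otimes>\<^bsub>B\<^esub> i y) \<in> H" if "(x, y) \<in> d" for x y
    proof -
      have "x \<in> S" "y \<in> S" using entourage_subset[OF d(1)] that by auto
      then have "pb g (i x \<otimes>\<^bsub>B\<^esub> i y) = i (\<pi> g x) \<otimes>\<^bsub>B\<^esub> i (\<pi> g y)"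
        using hom_mult[OF pb_hom[OF g] i_closed i_closed] pb_i[OF g] by simp
      then show ?thesis using e(2) d'(4) d(3) that \<open>g \<in> N\<close> by auto
    qed
    then have "pb g ` entourage_subgroup d \<subseteq> H"
      unfolding entourage_subgroup_def
      by (intro hom_image_generate_subset[OF group_B group_B pb_hom[OF g]
            entourage_generators_closed[OF d(1)] assms(1)]) blast
    with v show ?thesis by blast
  qed
  with d'(2,3) subgroup_entourage_subgroup[OF d(1)] entourage_subgroup_open[OF d(1)] that
  show thesis by blast
qed

lemma orbit_continuous:
  assumes "subgroup H B" "openin TB H" "g0 \<in> carrier G" "u \<in> carrier B"
  obtains N where "openin T N" "g0 \<in> N" "\<And>g. g \<in> N \<Longrightarrow> pb g u \<otimes>\<^bsub>B\<^esub> pb g0 u \<in> H"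
proof -
  define M where
    "M = {u \<in> carrier B. \<exists>N. openin T N \<and> g0 \<in> N \<and> (\<forall>g\<in>N. pb g u \<otimes>\<^bsub>B\<^esub> pb g0 u \<in> H)}"
  have "subgroup M B"
  proof (rule subgroup.intro)
    show "M \<subseteq> carrier B" unfolding M_def by blast
  next
    have "pb g \<one>\<^bsub>B\<^esub> \<otimes>\<^bsub>B\<^esub> pb g0 \<one>\<^bsub>B\<^esub> \<in> H" if "g \<in> carrier G" for g
      using hom_one[OF pb_hom[OF that] group_B group_B] hom_one[OF pb_hom[OF assms(3)] group_B group_B]
        subgroup.one_closed[OF assms(1)] by simp
    then show "\<one>\<^bsub>B\<^esub> \<in> M"
      unfolding M_def using assms(3) topspace_T openin_topspace[of T]
      by (intro CollectI conjI B.one_closed exI[of _ "topspace T"]) auto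
  next
    fix u assume "u \<in> M"
    then show "inv\<^bsub>B\<^esub> u \<in> M" unfolding M_def using inv_B by simp
  next
    fix a b assume "a \<in> M" "b \<in> M"
    then obtain Na Nb where ab: "a \<in> carrier B" "b \<in> carrier B"
      and Na: "openin T Na" "g0 \<in> Na" "\<forall>g\<in>Na. pb g a \<otimes>\<^bsub>B\<^esub> pb g0 a \<in> H"
      and Nb: "openin T Nb" "g0 \<in> Nb" "\<forall>g\<in>Nb. pb g b \<otimes>\<^bsub>B\<^esub> pb g0 b \<in> H"
      unfolding M_def by blast
    have "pb g (a \<otimes>\<^bsub>B\<^esub> b) \<otimes>\<^bsub>B\<^esub> pb g0 (a \<otimes>\<^bsub>B\<^esub> b) \<in> H" if g: "g \<in> Na \<inter> Nb" for g
    proof -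
      have gc: "g \<in> carrier G" using openin_subset[OF Na(1)] g topspace_T by blast
      have "pb g (a \<otimes>\<^bsub>B\<^esub> b) \<otimes>\<^bsub>B\<^esub> pb g0 (a \<otimes>\<^bsub>B\<^esub> b)
          = (pb g a \<otimes>\<^bsub>B\<^esub> pb g0 a) \<otimes>\<^bsub>B\<^esub> (pb g b \<otimes>\<^bsub>B\<^esub> pb g0 b)"
        using hom_mult[OF pb_hom[OF gc] ab] hom_mult[OF pb_hom[OF assms(3)] ab]
          pb_closed[OF gc] pb_closed[OF assms(3)] ab by (simp add: B.m_ac)
      then show ?thesis using Na(3) Nb(3) g subgroup.m_closed[OF assms(1)] by simp
    qed
    then show "a \<otimes>\<^bsub>B\<^esub> b \<in> M"
      unfolding M_def using ab Na(1,2) Nb(1,2) by (intro CollectI conjI B.m_closed exI[of _ "Na \<inter> Nb"]) auto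
  qed
  moreover have "i ` S \<subseteq> M"
  proof
    fix v assume "v \<in> i ` S"
    then obtain x where x: "x \<in> S" "v = i x" by blast
    obtain N where "openin T N" "g0 \<in> N" "\<And>g. g \<in> N \<Longrightarrow> i (\<pi> g x) \<otimes>\<^bsub>B\<^esub> i (\<pi> g0 x) \<in> H"
      using orbit_of_generator_near[OF assms(2) subgroup.one_closed[OF assms(1)] x(1) assms(3)] by metis
    moreover have "\<And>g. g \<in> N \<Longrightarrow> g \<in> carrier G" using calculation(1) openin_subset topspace_T by blast
    ultimately show "v \<in> M" unfolding M_def using x i_closed pb_i assms(3) by auto
  qed
  ultimately have "u \<in> M" using B.generate_subgroup_incl carrier_B_generate assms(4) by blast
  with that show thesis unfolding M_def by blast
qed

lemma action_locally_into_open: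
  assumes "openin TB W" "g0 \<in> carrier G" "u0 \<in> carrier B" "pb g0 u0 \<in> W"
  obtains N V where "openin T N" "openin TB V" "g0 \<in> N" "u0 \<in> V"
    "\<And>g u. g \<in> N \<Longrightarrow> u \<in> V \<Longrightarrow> pb g u \<in> W"
proof -
  define w where "w = pb g0 u0"
  obtain H where H: "subgroup H B" "openin TB H" "\<And>v. v \<in> H \<Longrightarrow> w \<otimes>\<^bsub>B\<^esub> v \<in> W"
    using NA_group_open_subgroup_translate[OF NA_group_B assms(1,4)] unfolding w_def by metis
  obtain N1 M where N1: "openin T N1" "g0 \<in> N1" "subgroup M B" "openin TB M"
    "\<And>g v. g \<in> N1 \<Longrightarrow> v \<in> M \<Longrightarrow> pb g v \<in> H"
    using equicontinuous_at_one[OF H(1,2) assms(2)] by metis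
  obtain N2 where N2: "openin T N2" "g0 \<in> N2" "\<And>g. g \<in> N2 \<Longrightarrow> pb g u0 \<otimes>\<^bsub>B\<^esub> w \<in> H"
    using orbit_continuous[OF H(1,2) assms(2,3)] unfolding w_def by metis
  define V where "V = {v \<in> carrier B. u0 \<otimes>\<^bsub>B\<^esub> v \<in> M}"
  have "openin TB V" unfolding V_def by (rule openin_left_translate_preimage[OF topological_group_B N1(4) assms(3)])
  moreover have "u0 \<in> V" unfolding V_def using assms(3) sq_B subgroup.one_closed[OF N1(3)] by simp
  \<comment> \<open>pb g u = w \<cdot> (pb g u0 \<cdot> w) \<cdot> pb g (u0 \<cdot> u), where the middle factor lies in H by
    orbit continuity at u0 and the last one by equicontinuity\<close>
  moreover have "pb g u \<in> W" if g: "g \<in> N1 \<inter> N2" and u: "u \<in> V" for g u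
  proof -
    have gc: "g \<in> carrier G" using openin_subset[OF N1(1)] g topspace_T by blast
    have uc: "u \<in> carrier B" and uM: "u0 \<otimes>\<^bsub>B\<^esub> u \<in> M" using u unfolding V_def by auto
    have c: "pb g u0 \<in> carrier B" "w \<in> carrier B" "pb g (u0 \<otimes>\<^bsub>B\<^esub> u) \<in> carrier B"
      using pb_closed gc assms(2,3) uc unfolding w_def by auto
    have "u = u0 \<otimes>\<^bsub>B\<^esub> (u0 \<otimes>\<^bsub>B\<^esub> u)" using assms(3) uc sq_B by (simp add: B.m_assoc[symmetric])
    then have "pb g u = pb g u0 \<otimes>\<^bsub>B\<^esub> pb g (u0 \<otimes>\<^bsub>B\<^esub> u)"
      using hom_mult[OF pb_hom[OF gc] assms(3)] uc assms(3) by (metis B.m_closed)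
    also have "\<dots> = (w \<otimes>\<^bsub>B\<^esub> w) \<otimes>\<^bsub>B\<^esub> (pb g u0 \<otimes>\<^bsub>B\<^esub> pb g (u0 \<otimes>\<^bsub>B\<^esub> u))"
      using c sq_B by simp
    also have "\<dots> = w \<otimes>\<^bsub>B\<^esub> ((pb g u0 \<otimes>\<^bsub>B\<^esub> w) \<otimes>\<^bsub>B\<^esub> pb g (u0 \<otimes>\<^bsub>B\<^esub> u))"
      using c by (simp add: B.m_ac)
    finally show ?thesis
      using H(3) N1(5) N2(3) g uM subgroup.m_closed[OF H(1)] by simp
  qed
  ultimately show thesis using that[of "N1 \<inter> N2" V] N1(1,2) N2(1,2) by blast
qed

lemma continuous_map_action: "continuous_map (prod_topology T TB) TB (\<lambda>(g, u). pb g u)"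
  unfolding continuous_map_def
proof (intro conjI allI impI)
  show "(\<lambda>(g, u). pb g u) \<in> topspace (prod_topology T TB) \<rightarrow> topspace TB"
    using pb_closed topspace_T topspace_B by auto
  fix W assume W: "openin TB W"
  let ?P = "{p \<in> topspace (prod_topology T TB). (\<lambda>(g, u). pb g u) p \<in> W}"
  show "openin (prod_topology T TB) ?P"
  proof (subst openin_subopen, intro ballI)
    fix p assume "p \<in> ?P"
    then obtain g0 u0 where p: "p = (g0, u0)" "g0 \<in> carrier G" "u0 \<in> carrier B" "pb g0 u0 \<in> W"
      using topspace_T topspace_B by auto
    obtain N V where NV: "openin T N" "openin TB V" "g0 \<in> N" "u0 \<in> V"
      "\<And>g u. g \<in> N \<Longrightarrow> u \<in> V \<Longrightarrow> pb g u \<in> W"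
      using action_locally_into_open[OF W p(2-4)] by metis
    have "openin (prod_topology T TB) (N \<times> V)" using NV(1,2) by (simp add: openin_prod_Times_iff)
    moreover have "N \<times> V \<subseteq> ?P" using NV openin_subset[OF NV(1)] openin_subset[OF NV(2)] by auto
    ultimately show "\<exists>Q. openin (prod_topology T TB) Q \<and> p \<in> Q \<and> Q \<subseteq> ?P" using p(1) NV(3,4) by blast
  qed
qed

end

end

theorem theorem7p6:
  fixes G :: "'g monoid" and T :: "'g topology"
    and S :: "'a set" and U :: "('a \<times> 'a) set set" and \<pi> :: "'g \<Rightarrow> 'a \<Rightarrow> 'a"
    and B :: "'b monoid" and TB :: "'b topology" and i :: "'a \<Rightarrow> 'b"
  assumes "topological_group G T"
    and "nonarch_uniformity S U"
    and "group_action_on G S \<pi>"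
    and "continuous_map (prod_topology T (utop S U)) (utop S U) (\<lambda>(g, x). \<pi> g x)"
    and "pi_uniform T S U \<pi>"
    and "free_boolean_NA S U B TB i"
  shows "(\<exists>\<pi>b. group_action_on G (carrier B) \<pi>b \<and> (\<forall>g\<in>carrier G. \<pi>b g \<in> iso B B) \<and>
              (\<forall>g\<in>carrier G. \<forall>x\<in>S. \<pi>b g (i x) = i (\<pi> g x))) \<and>
         (\<forall>\<pi>b. group_action_on G (carrier B) \<pi>b \<and> (\<forall>g\<in>carrier G. \<pi>b g \<in> iso B B) \<and>
              (\<forall>g\<in>carrier G. \<forall>x\<in>S. \<pi>b g (i x) = i (\<pi> g x)) \<longrightarrow>
              continuous_map (prod_topology T TB) TB (\<lambda>(g, u). \<pi>b g u)) \<and>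
         unif_embedding S U (carrier B) (two_sided_unif B TB) i \<and>
         unif_G_automorphizable_NA TYPE('b) G T S U \<pi>"
proof -
  interpret free_boolean_NA_action S U B TB i G T \<pi>
    by unfold_locales (fact assms)+
  have continuous: "continuous_map (prod_topology T TB) TB (\<lambda>(g, u). \<pi>b g u)"
    if "\<forall>g\<in>carrier G. \<pi>b g \<in> iso B B" "\<forall>g\<in>carrier G. \<forall>x\<in>S. \<pi>b g (i x) = i (\<pi> g x)" for \<pi>b
    using that by (intro continuous_map_action) (auto simp: iso_def)
  have induced: "group_action_on G (carrier B) induced_action"
    "\<forall>g\<in>carrier G. induced_action g \<in> iso B B"
    "\<forall>g\<in>carrier G. \<forall>x\<in>S. induced_action g (i x) = i (\<pi> g x)"
    using group_action_induced_action induced_action_iso induced_action(2) by auto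
  then have "cont_action_by_automorphisms G T B TB induced_action"
    unfolding cont_action_by_automorphisms_def using continuous by blast
  then have "unif_G_automorphizable_NA TYPE('b) G T S U \<pi>"
    unfolding unif_G_automorphizable_NA_def using NA_group_B unif_embedding_i induced(3)
    by (intro exI[of _ B] exI[of _ TB] exI[of _ induced_action] exI[of _ i]) simp
  with induced continuous unif_embedding_i show ?thesis by blast
qed

end
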